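(* Let $q$ be a power of the prime $p$, let $\mathcal{G}$ be a subgroup of the additive group $(\mathbb{F}_q,+)$ of order $p$, and let $f$ be a $\mathcal{G}$-fixed monic irreducible polynomial in $\mathbb{F}_q[T]$ of degree $ps$ (with $s\in\mathbb{Z}_{\geqslant 1}$). Then, in $\mathbb{F}_{q^s}[T]$, $f$ factors as a product of irreducible polynomials over $\mathbb{F}_{q^s}$ each of which is $\mathcal{G}$-fixed and of the form $T^p-\beta T-\gamma$ with $\beta\in\mathbb{F}_q^{\times}$ and $\gamma\in\mathbb{F}_{q^s}$.
   Context: A polynomial $f$ (over $\mathbb{F}_q$ or an extension of $\mathbb{F}_q$) is $\mathcal{G}$-fixed if $f(T+a)=f(T)$ for all $a\in\mathcal{G}$. Irreducible polynomials over $\mathbb{F}_{q^s}$ of the form $T^p-\beta T-\gamma$ with $\beta\in\mathbb{F}_q^\times$, $\gamma\in\mathbb{F}_{q^s}$ are called almost Artin–Schreier primes. *)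

theory Defs
  imports "HOL-Computational_Algebra.Computational_Algebra"
begin

definition G_fixed :: "'a::comm_ring_1 set \<Rightarrow> 'a poly \<Rightarrow> bool" where
  "G_fixed G f \<longleftrightarrow> (\<forall>a\<in>G. pcompose f [:a, 1:] = f)"

definition add_subgroup :: "'a::ab_group_add set \<Rightarrow> bool" where
  "add_subgroup G \<longleftrightarrow> 0 \<in> G \<and> (\<forall>x\<in>G. \<forall>y\<in>G. x + y \<in> G) \<and> (\<forall>x\<in>G. - x \<in> G)"

end

(*
  Pick a \<noteq> 0 in G and put L = T^p - a^(p-1) T.  Every element of G is a root of L and L is
  additive in characteristic p, so L(T + c) = L(T) for c \<in> G; Euclidean division by L then shows
  that a G-fixed polynomial is a polynomial in L.  Hence f = h(L) with h irreducible of degree s.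
  Since h divides T^(q^s) - T, over F_(q^s) it splits into linear factors T - b, and
  f = \<Prod> (L - b).  No factor L - b has a root in F_(q^s): a root of f there would make the q^(ps)
  residues of degree < ps inject into F_(q^s).  Finally T^p - \<beta> T - \<gamma> without roots is irreducible:
  the translates of a monic irreducible factor m by F_p a are either pairwise distinct, giving p
  distinct factors and forcing deg m = 1, or m is fixed by a nonzero translation, which makes m a
  polynomial in an additive polynomial of degree p.
*)
theory Submission
  imports Defs "Berlekamp_Zassenhaus.Finite_Field"
begin

hide_const (open) up_ring.monom up_ring.coeff

lemma monic_dvd_imp_eq:
  fixes p q :: "'k::field poly"
  assumes "monic p" "monic q" "p dvd q" "degree q \<le> degree p"
  shows "p = q"
proof -
  from \<open>p dvd q\<close> obtain r where q: "q = p * r" ..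
  have "p \<noteq> 0"
    using assms(1) by auto
  moreover have "r \<noteq> 0"
    using assms(2) q by auto
  ultimately have "degree r = 0"
    using q \<open>degree q \<le> degree p\<close> by (simp add: degree_mult_eq)
  then obtain c where r: "r = [:c:]" by (rule degree_eq_zeroE)
  with q have "lead_coeff q = lead_coeff p * c"
    by (simp add: lead_coeff_mult)
  with assms(1,2) have "c = 1" by simp
  with q r show ?thesis by simp
qed

lemma monic_irreducible_dvd_imp_eq:
  fixes p q :: "'k::field poly"
  assumes "irreducible p" "irreducible q" "monic p" "monic q" "p dvd q"
  shows "p = q"
proof (rule monic_dvd_imp_eq)
  from \<open>p dvd q\<close> obtain r where q: "q = p * r" ..
  then have "is_unit r"
    using assms(1,2) irreducibleD irreducible_not_unit by blast
  then obtain c where "r = [:c:]"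
    by (rule is_unit_polyE)
  then show "degree q \<le> degree p"
    using q by simp
qed fact+

lemma not_dvd_degree_less:
  fixes h y :: "'k::field poly"
  shows "y \<noteq> 0 \<Longrightarrow> degree y < degree h \<Longrightarrow> \<not> h dvd y"
  using dvd_imp_degree_le[of h y] by auto

lemma irreducible_degree_pos:
  fixes p :: "'k::field poly"
  assumes "irreducible p"
  shows "0 < degree p"
  using assms is_unit_iff_degree[of p] irreducible_not_unit by fastforce

(* Polynomials over an arbitrary field type are not an instance of the factorial-ring classes,
   so irreducible polynomials are used through prime_elem (field_poly_irreducible_imp_prime). *)
lemma prime_elem_dvd_prodE:
  fixes p :: "'k::field poly"
  assumes "prime_elem p" "p dvd (\<Prod>x\<in>A. f x)"
  obtains x where "x \<in> A" "p dvd f x"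
proof -
  from assms(2) have "p dvd prod_mset (image_mset f (mset_set A))"
    by (simp add: prod_unfold_prod_mset)
  then obtain a where "a \<in># image_mset f (mset_set A)" "p dvd a"
    by (rule prime_elem_dvd_prod_msetE[OF assms(1)])
  moreover have "x \<in># mset_set A \<Longrightarrow> x \<in> A" for x
    by (cases "finite A") auto
  ultimately show ?thesis
    using that by auto
qed

lemma prod_monic_irreducible_dvd:
  fixes P :: "'k::field poly"
  assumes "finite S" "\<And>x. x \<in> S \<Longrightarrow> irreducible x \<and> monic x \<and> x dvd P"
  shows "\<Prod>S dvd P"
  using assms
proof (induction S rule: finite_induct)
  case (insert x S)
  then have x: "prime_elem x" "monic x" "x dvd P"
    by (auto intro: field_poly_irreducible_imp_prime)
  have "\<Prod>S dvd P"
    using insert by blast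
  then obtain z where P: "P = \<Prod>S * z" ..
  have "\<not> x dvd \<Prod>S"
  proof
    assume "x dvd \<Prod>S"
    then obtain y where "y \<in> S" "x dvd y"
      by (rule prime_elem_dvd_prodE[OF x(1)])
    with insert x have "x = y"
      by (intro monic_irreducible_dvd_imp_eq) (auto simp: prime_elem_imp_irreducible)
    with \<open>y \<in> S\<close> \<open>x \<notin> S\<close> show False by simp
  qed
  with x P have "x dvd z"
    by (simp add: prime_elem_dvd_mult_iff)
  then have "\<Prod>S * x dvd P"
    unfolding P by (rule mult_dvd_mono[OF dvd_refl])
  then show ?case
    by (simp only: prod.insert[OF insert.hyps] mult.commute)
qed simp

lemma monic_dvd_prod_linear_factors:
  fixes P :: "'k::field poly"
  assumes "monic P" "P dvd (\<Prod>b\<in>A. [:-b, 1:])"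
  shows "\<exists>xs. P = prod_list (map (\<lambda>b. [:-b, 1:]) xs)"
  using assms
proof (induction "degree P" arbitrary: P rule: less_induct)
  case less
  show ?case
  proof (cases "degree P = 0")
    case True
    then obtain c where "P = [:c:]"
      by (rule degree_eq_zeroE)
    with less.prems(1) have "P = 1"
      by simp
    then show ?thesis
      by (intro exI[of _ "[]"]) simp
  next
    case False
    then obtain m r where m: "irreducible m" "P = m * r" "monic m"
      using irreducible_monic_factor by blast
    then have "m dvd (\<Prod>b\<in>A. [:-b, 1:])"
      using less.prems(2) dvd_mult_left by blast
    then obtain b where "b \<in> A" "m dvd [:-b, 1:]"
      by (rule prime_elem_dvd_prodE[OF field_poly_irreducible_imp_prime[OF m(1)]])
    then have mb: "m = [:-b, 1:]"
      using m by (intro monic_irreducible_dvd_imp_eq) (simp_all add: irreducible_linear_field_poly)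
    have "r \<noteq> 0"
      using less.prems(1) m(2) by auto
    moreover have "m \<noteq> 0"
      using m(1) by auto
    ultimately have "degree P = degree m + degree r"
      unfolding m(2) by (intro degree_mult_eq)
    moreover have "lead_coeff P = lead_coeff m * lead_coeff r"
      unfolding m(2) by (rule lead_coeff_mult)
    ultimately have "monic r" "degree P = Suc (degree r)"
      using less.prems(1) m(3) mb by simp_all
    moreover have "r dvd (\<Prod>b\<in>A. [:-b, 1:])"
      using less.prems(2) m(2) dvd_mult_right by blast
    moreover have "degree r < degree P"
      using \<open>degree P = Suc (degree r)\<close> by simp
    ultimately obtain xs where "r = prod_list (map (\<lambda>b. [:-b, 1:]) xs)"
      using less.hyps by blast
    with m(2) mb show ?thesis
      by (intro exI[of _ "b # xs"]) simp
  qed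
qed

lemma irreducible_pcompose_imp_irreducible:
  fixes h L :: "'k::field poly"
  assumes irr: "irreducible (pcompose h L)" and L: "0 < degree L"
  shows "irreducible h"
proof (rule irreducibleI)
  show "h \<noteq> 0"
    using irr by auto
  show "\<not> is_unit h"
  proof
    assume "is_unit h"
    then obtain c where "h = [:c:]"
      by (rule is_unit_polyE)
    then have "pcompose h L = h"
      by simp
    with \<open>is_unit h\<close> irr show False
      using irreducible_not_unit by metis
  qed
  have unit: "is_unit z" if "z \<noteq> 0" "is_unit (pcompose z L)" for z
  proof -
    from \<open>is_unit (pcompose z L)\<close> obtain c where "pcompose z L = [:c:]"
      by (rule is_unit_polyE)
    then have "degree z * degree L = 0"
      by (metis degree_pCons_0 degree_pcompose)
    with L \<open>z \<noteq> 0\<close> show ?thesis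
      by (simp add: is_unit_iff_degree)
  qed
  fix x y assume "h = x * y"
  with \<open>h \<noteq> 0\<close> have "x \<noteq> 0" "y \<noteq> 0" "pcompose h L = pcompose x L * pcompose y L"
    by (auto simp: pcompose_mult)
  with irr unit show "is_unit x \<or> is_unit y"
    using irreducibleD by blast
qed

lemma irreducible_pcompose_shift:
  fixes m :: "'k::field poly"
  assumes "irreducible m"
  shows "irreducible (pcompose m [:c, 1:])"
proof (rule irreducible_pcompose_imp_irreducible)
  have "pcompose (pcompose m [:c, 1:]) [:-c, 1:] = m"
    by (simp add: pcompose_assoc[symmetric])
  with assms show "irreducible (pcompose (pcompose m [:c, 1:]) [:-c, 1:])"
    by simp
qed simp

lemma pcompose_div_mod:
  fixes f L g :: "'k::field poly"
  assumes L: "0 < degree L" and g: "0 < degree g"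
  shows "pcompose f g div pcompose L g = pcompose (f div L) g"
    and "pcompose f g mod pcompose L g = pcompose (f mod L) g"
proof -
  have degL: "0 < degree (pcompose L g)"
    using L g by simp
  have "pcompose f g = pcompose (f div L * L + f mod L) g"
    by simp
  also have "\<dots> = pcompose (f mod L) g + pcompose (f div L) g * pcompose L g"
    by (simp only: pcompose_add pcompose_mult add.commute)
  finally have f: "pcompose f g = pcompose (f mod L) g + pcompose (f div L) g * pcompose L g" .
  have "f mod L = 0 \<or> degree (f mod L) < degree L"
    using L by (intro degree_mod_less) auto
  then have deg: "degree (pcompose (f mod L) g) < degree (pcompose L g)"
    using degL g by auto
  from degL have "pcompose L g \<noteq> 0"
    by (metis degree_0 less_irrefl)
  with deg show "pcompose f g div pcompose L g = pcompose (f div L) g"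
    by (simp add: f div_poly_less)
  from deg show "pcompose f g mod pcompose L g = pcompose (f mod L) g"
    by (simp add: f mod_poly_less)
qed

lemma G_fixed_div_mod:
  fixes f L :: "'k::field poly"
  assumes "G_fixed G L" "G_fixed G f" "0 < degree L"
  shows "G_fixed G (f div L)" "G_fixed G (f mod L)"
proof -
  have "pcompose (f div L) [:c, 1:] = f div L \<and> pcompose (f mod L) [:c, 1:] = f mod L"
    if "c \<in> G" for c
    using pcompose_div_mod[OF assms(3), of "[:c, 1:]" f] assms that
    by (simp add: G_fixed_def)
  then show "G_fixed G (f div L)" "G_fixed G (f mod L)"
    by (simp_all add: G_fixed_def)
qed

lemma G_fixed_degree_less_card_imp_const:
  fixes r :: "'k::field poly"
  assumes "finite G" "G_fixed G r" "degree r < card G"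
  shows "r = [:poly r 0:]"
proof (rule ccontr)
  define D where "D = r - [:poly r 0:]"
  assume "r \<noteq> [:poly r 0:]"
  then have "D \<noteq> 0"
    by (simp add: D_def)
  have "G \<subseteq> {x. poly D x = 0}"
  proof
    fix c assume "c \<in> G"
    then have "poly r c = poly (pcompose r [:c, 1:]) 0"
      by (simp add: poly_pcompose)
    also have "\<dots> = poly r 0"
      using \<open>c \<in> G\<close> assms(2) by (simp add: G_fixed_def)
    finally show "c \<in> {x. poly D x = 0}"
      by (simp add: D_def)
  qed
  then have "card G \<le> card {x. poly D x = 0}"
    using \<open>D \<noteq> 0\<close> by (intro card_mono poly_roots_finite)
  also have "\<dots> \<le> degree D"
    using \<open>D \<noteq> 0\<close> by (rule card_poly_roots_bound)
  also have "\<dots> \<le> degree r"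
    unfolding D_def by (rule degree_diff_le) simp_all
  finally show False
    using assms(3) by simp
qed

(* The quotient by L is again G-fixed and of lower degree; the remainder is G-fixed of degree
   < card G, hence constant. *)
lemma G_fixed_imp_pcompose:
  fixes f L :: "'k::field poly"
  assumes G: "finite G" "degree L \<le> card G" and L: "G_fixed G L" "0 < degree L"
    and "G_fixed G f"
  shows "\<exists>h. f = pcompose h L"
  using \<open>G_fixed G f\<close>
proof (induction "degree f" arbitrary: f rule: less_induct)
  case less
  have "G_fixed G (f div L)" "G_fixed G (f mod L)"
    using G_fixed_div_mod L less.prems by blast+
  moreover have "degree (f mod L) < card G"
    using degree_mod_less[of L f] L G by fastforce
  ultimately have r: "f mod L = [:poly (f mod L) 0:]"
    using G_fixed_degree_less_card_imp_const G(1) by blast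
  obtain h where h: "f div L = pcompose h L"
  proof (cases "f div L = 0")
    case False
    then have "degree (f div L) < degree f"
      using L(2) by (auto intro!: degree_div_less simp: div_poly_eq_0_iff)
    then show ?thesis
      using less.hyps \<open>G_fixed G (f div L)\<close> that by blast
  qed (use that[of 0] in simp)
  have "f = f div L * L + f mod L"
    by simp
  also have "\<dots> = pcompose (pCons (poly (f mod L) 0) h) L"
    by (subst r) (simp add: h algebra_simps)
  finally show ?case ..
qed

lemma pcompose_shift_shift:
  fixes m :: "'k::comm_ring_1 poly"
  shows "pcompose (pcompose m [:a, 1:]) [:b, 1:] = pcompose m [:a + b, 1:]"
  by (simp add: pcompose_assoc[symmetric] algebra_simps)

lemma monic_degree_one_root:
  fixes m :: "'k::comm_ring_1 poly"
  assumes "degree m = 1" "monic m"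
  shows "poly m (- coeff m 0) = 0"
proof -
  define a where "a = coeff m 0"
  have "m = [:a, 1:]"
    using assms by (intro poly_eqI) (auto simp: a_def coeff_pCons coeff_eq_0 split: nat.split)
  then show ?thesis
    by simp
qed

lemma card_mult_degree_le_if_shifts_distinct:
  fixes P m :: "'k::field poly"
  assumes G: "finite G" "G_fixed G P" and "P \<noteq> 0"
    and m: "irreducible m" "monic m" "m dvd P"
    and inj: "inj_on (\<lambda>c. pcompose m [:c, 1:]) G"
  shows "card G * degree m \<le> degree P"
proof -
  define S where "S = (\<lambda>c. pcompose m [:c, 1:]) ` G"
  have "x dvd P" if "x \<in> S" for x
  proof -
    from \<open>x \<in> S\<close> obtain c where c: "c \<in> G" "x = pcompose m [:c, 1:]"
      by (auto simp: S_def)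
    from \<open>m dvd P\<close> obtain r where "P = m * r" ..
    then have "pcompose P [:c, 1:] = x * pcompose r [:c, 1:]"
      by (simp add: c pcompose_mult)
    with c G(2) show ?thesis
      by (simp add: G_fixed_def)
  qed
  moreover have "irreducible x" "monic x" "degree x = degree m" if "x \<in> S" for x
    using that m lead_coeff_comp[of "[:_, 1:]" m]
    by (auto simp: S_def irreducible_pcompose_shift)
  ultimately have "\<Prod>S dvd P"
    using G(1) by (intro prod_monic_irreducible_dvd) (auto simp: S_def)
  then have "degree (\<Prod>S) \<le> degree P"
    using \<open>P \<noteq> 0\<close> by (rule dvd_imp_degree_le)
  moreover have "degree (\<Prod>S) = card S * degree m"
  proof -
    have "0 \<notin> S"
      using \<open>\<And>x. x \<in> S \<Longrightarrow> irreducible x\<close> not_irreducible_zero by blast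
    then show ?thesis
      using \<open>\<And>x. x \<in> S \<Longrightarrow> degree x = degree m\<close>
      by (subst degree_prod_eq_sum_degree) auto
  qed
  moreover have "card S = card G"
    using inj by (simp add: S_def card_image)
  ultimately show ?thesis
    by simp
qed

definition almost_AS_poly :: "nat \<Rightarrow> 'a::comm_ring_1 \<Rightarrow> 'a \<Rightarrow> 'a poly" where
  "almost_AS_poly p \<beta> \<gamma> = monom 1 p - [:\<gamma>, \<beta>:]"

lemma degree_almost_AS_poly:
  assumes "2 \<le> p"
  shows "degree (almost_AS_poly p \<beta> \<gamma>) = p" "lead_coeff (almost_AS_poly p \<beta> \<gamma>) = 1"
proof -
  have coeff_p: "coeff (almost_AS_poly p \<beta> \<gamma>) p = 1"
    using assms by (simp add: almost_AS_poly_def coeff_pCons split: nat.split)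
  have "degree (almost_AS_poly p \<beta> \<gamma>) \<le> p"
    unfolding almost_AS_poly_def using assms
    by (intro degree_diff_le) (auto simp: degree_monom_le)
  moreover have "p \<le> degree (almost_AS_poly p \<beta> \<gamma>)"
    using coeff_p by (intro le_degree) simp
  ultimately show "degree (almost_AS_poly p \<beta> \<gamma>) = p"
    by simp
  with coeff_p show "lead_coeff (almost_AS_poly p \<beta> \<gamma>) = 1"
    by simp
qed

lemma pcompose_linear_almost_AS_poly:
  "pcompose [:-\<gamma>, 1:] (almost_AS_poly p \<beta> 0) = almost_AS_poly p \<beta> \<gamma>"
  by (simp add: almost_AS_poly_def pcompose_pCons algebra_simps)

lemma pcompose_prod_linear_almost_AS_poly:
  "pcompose (prod_list (map (\<lambda>b. [:-b, 1:]) xs)) (almost_AS_poly p \<beta> 0) =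
    prod_list (map (almost_AS_poly p \<beta>) xs)"
  by (simp only: pcompose_hom.hom_prod_list map_map o_def pcompose_linear_almost_AS_poly)

lemma (in comm_ring_hom) map_poly_almost_AS_poly:
  "map_poly hom (almost_AS_poly p \<beta> \<gamma>) = almost_AS_poly p (hom \<beta>) (hom \<gamma>)"
proof -
  interpret map_hom: map_poly_comm_ring_hom hom ..
  show ?thesis
    by (simp add: almost_AS_poly_def map_poly_monom map_hom.hom_minus map_poly_pCons_hom)
qed

lemma of_nat_power_CHAR:
  assumes "prime p" "CHAR('k::comm_ring_1) = p"
  shows "(of_nat k :: 'k) ^ p = of_nat k"
proof (induction k)
  case 0
  show ?case
    using prime_gt_0_nat[OF assms(1)] by (simp add: power_0_left)
next
  case (Suc k)
  have "(of_nat k + 1 :: 'k) ^ p = of_nat k ^ p + 1 ^ p"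
    using assms by (intro freshmans_dream) auto
  with Suc show ?case
    by (simp add: add.commute)
qed

lemma almost_AS_poly_shift:
  fixes \<beta> \<gamma> c :: "'k::comm_ring_1"
  assumes "prime p" "CHAR('k) = p"
  shows "pcompose (almost_AS_poly p \<beta> \<gamma>) [:c, 1:] = almost_AS_poly p \<beta> (\<gamma> - (c ^ p - \<beta> * c))"
proof -
  have "pcompose (monom 1 p) [:c, 1:] = ([:c:] + [:0, 1:]) ^ p"
    by (simp add: monom_altdef pcompose_hom.hom_power)
  also have "\<dots> = [:c:] ^ p + [:0, 1:] ^ p"
    using assms by (intro freshmans_dream) auto
  also have "\<dots> = [:c ^ p:] + monom 1 p"
    by (simp add: monom_altdef poly_const_pow)
  finally show ?thesis
    by (simp add: almost_AS_poly_def pcompose_diff algebra_simps)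
qed

lemma G_fixed_almost_AS_poly:
  fixes \<beta> \<gamma> :: "'k::comm_ring_1"
  assumes "prime p" "CHAR('k) = p" "\<And>c. c \<in> G \<Longrightarrow> c ^ p = \<beta> * c"
  shows "G_fixed G (almost_AS_poly p \<beta> \<gamma>)"
  using assms by (simp add: G_fixed_def almost_AS_poly_shift)

definition Fp_multiples :: "nat \<Rightarrow> 'a::semiring_1 \<Rightarrow> 'a set" where
  "Fp_multiples p a = (\<lambda>k. of_nat k * a) ` {..<p}"

lemma card_Fp_multiples:
  fixes a :: "'k::field"
  assumes "CHAR('k) = p" "a \<noteq> 0"
  shows "card (Fp_multiples p a) = p"
proof -
  have "inj_on (\<lambda>k. of_nat k * a) {..<p}"
  proof (rule inj_onI)
    fix j k assume "j \<in> {..<p}" "k \<in> {..<p}" "of_nat j * a = (of_nat k * a :: 'k)"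
    with assms(2) have "(of_nat j :: 'k) = of_nat k"
      by simp
    then have "[j = k] (mod CHAR('k))"
      by (simp only: of_nat_eq_iff_cong_CHAR)
    with assms(1) \<open>j \<in> {..<p}\<close> \<open>k \<in> {..<p}\<close> show "j = k"
      by (simp add: cong_def)
  qed
  then show ?thesis
    by (simp add: Fp_multiples_def card_image)
qed

lemma Fp_multiples_power_eq:
  fixes a \<beta> :: "'k::comm_ring_1"
  assumes "prime p" "CHAR('k) = p" "a ^ p = \<beta> * a" "c \<in> Fp_multiples p a"
  shows "c ^ p = \<beta> * c"
proof -
  from assms(4) obtain k where "c = of_nat k * a"
    by (auto simp: Fp_multiples_def)
  with assms(1-3) show ?thesis
    by (simp add: power_mult_distrib of_nat_power_CHAR mult.left_commute)
qed

lemma add_subgroup_eq_Fp_multiples: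
  fixes a :: "'k::field"
  assumes "CHAR('k) = p" "add_subgroup G" "finite G" "card G = p" "a \<in> G" "a \<noteq> 0"
  shows "G = Fp_multiples p a"
proof -
  have "of_nat k * a \<in> G" for k
    using assms(2,5) by (induction k) (auto simp: add_subgroup_def algebra_simps)
  then have "Fp_multiples p a \<subseteq> G"
    by (auto simp: Fp_multiples_def)
  with assms show ?thesis
    by (intro card_subset_eq[symmetric]) (simp_all add: card_Fp_multiples)
qed

lemma shift_fixed_imp_CHAR_dvd_degree:
  fixes m :: "'k::field poly"
  assumes p: "prime p" "CHAR('k) = p" and "c \<noteq> 0" "pcompose m [:c, 1:] = m"
  shows "p dvd degree m"
proof -
  let ?G = "Fp_multiples p c" and ?L = "almost_AS_poly p (c ^ (p - 1)) 0"
  have "pcompose m [:of_nat k * c, 1:] = m" for k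
  proof (induction k)
    case (Suc k)
    then show ?case
      using assms(4) pcompose_shift_shift[of m "of_nat k * c" c] by (simp add: algebra_simps)
  qed simp
  then have "G_fixed ?G m"
    by (auto simp: G_fixed_def Fp_multiples_def)
  have "2 \<le> p"
    using p(1) by (rule prime_ge_2_nat)
  have "c ^ p = c ^ (p - 1) * c"
    using \<open>2 \<le> p\<close> power_minus_mult[of p c] by simp
  then have "G_fixed ?G ?L"
    using p by (intro G_fixed_almost_AS_poly) (auto intro: Fp_multiples_power_eq)
  moreover have "degree ?L = p" "card ?G = p"
    using \<open>2 \<le> p\<close> p(2) \<open>c \<noteq> 0\<close> by (simp_all add: degree_almost_AS_poly card_Fp_multiples)
  ultimately obtain h where "m = pcompose h ?L"
    using G_fixed_imp_pcompose[of ?G ?L m] \<open>G_fixed ?G m\<close> \<open>2 \<le> p\<close>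
    by (auto simp: Fp_multiples_def)
  then show ?thesis
    using \<open>degree ?L = p\<close> by simp
qed

lemma almost_AS_poly_irreducible:
  fixes a \<beta> \<gamma> :: "'k::field"
  assumes p: "prime p" "CHAR('k) = p" and a: "a \<noteq> 0" "a ^ p = \<beta> * a"
    and no_root: "\<And>x. poly (almost_AS_poly p \<beta> \<gamma>) x \<noteq> 0"
  shows "irreducible (almost_AS_poly p \<beta> \<gamma>)"
proof -
  let ?P = "almost_AS_poly p \<beta> \<gamma>"
  have "2 \<le> p"
    using p(1) by (rule prime_ge_2_nat)
  then have P: "degree ?P = p" "monic ?P"
    using degree_almost_AS_poly[OF \<open>2 \<le> p\<close>, of \<beta> \<gamma>] by simp_all
  then have "0 < degree ?P" "?P \<noteq> 0"
    using \<open>2 \<le> p\<close> by auto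
  then obtain m r where m: "irreducible m" "?P = m * r" "monic m"
    using irreducible_monic_factor by blast
  then have "m dvd ?P" "0 < degree m"
    by (simp_all add: irreducible_degree_pos)
  then have "degree m \<le> p"
    using dvd_imp_degree_le[OF _ \<open>?P \<noteq> 0\<close>] P(1) by simp
  show ?thesis
  proof (cases "\<exists>c. c \<noteq> 0 \<and> pcompose m [:c, 1:] = m")
    case True
    then have "p dvd degree m"
      using shift_fixed_imp_CHAR_dvd_degree p by blast
    then have "p \<le> degree m"
      using \<open>0 < degree m\<close> by (rule dvd_imp_le)
    with \<open>degree m \<le> p\<close> have "degree m = p"
      by simp
    with m \<open>m dvd ?P\<close> P have "m = ?P"
      by (intro monic_dvd_imp_eq) simp_all
    with m(1) show ?thesis by simp
  next
    case False
    let ?G = "Fp_multiples p a"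
    have "inj_on (\<lambda>c. pcompose m [:c, 1:]) ?G"
    proof (rule inj_onI)
      fix c d assume eq: "pcompose m [:c, 1:] = pcompose m [:d, 1:]"
      have "pcompose m [:c - d, 1:] = pcompose (pcompose m [:d, 1:]) [:- d, 1:]"
        using pcompose_shift_shift[of m c "- d"] by (simp add: eq)
      also have "\<dots> = m"
        using pcompose_shift_shift[of m d "- d"] by simp
      finally have "pcompose m [:c - d, 1:] = m" .
      with False show "c = d"
        by (metis eq_iff_diff_eq_0)
    qed
    moreover have "G_fixed ?G ?P"
      using p a by (intro G_fixed_almost_AS_poly) (auto intro: Fp_multiples_power_eq)
    ultimately have "card ?G * degree m \<le> degree ?P"
      using m \<open>m dvd ?P\<close> \<open>?P \<noteq> 0\<close>
      by (intro card_mult_degree_le_if_shifts_distinct) (auto simp: Fp_multiples_def)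
    with P p a \<open>0 < degree m\<close> \<open>2 \<le> p\<close> have "degree m = 1"
      by (simp add: card_Fp_multiples)
    then have "poly ?P (- coeff m 0) = 0"
      using monic_degree_one_root[OF _ m(3)] m(2) by simp
    with no_root show ?thesis by blast
  qed
qed

lemma add_subgroup_prime_card_roots:
  fixes G :: "'k::field set"
  assumes p: "prime p" "CHAR('k) = p" and G: "add_subgroup G" "finite G" "card G = p"
  obtains a \<beta> where "a \<in> G" "a \<noteq> 0" "\<beta> \<noteq> 0" "\<And>c. c \<in> G \<Longrightarrow> c ^ p = \<beta> * c"
proof -
  have "2 \<le> p"
    using p(1) by (rule prime_ge_2_nat)
  have "\<not> G \<subseteq> {0}"
  proof
    assume "G \<subseteq> {0}"
    then have "card G \<le> 1"
      using card_mono[of "{0}" G] by simp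
    with G(3) \<open>2 \<le> p\<close> show False by simp
  qed
  then obtain a where a: "a \<in> G" "a \<noteq> 0"
    by blast
  have "a ^ p = a ^ (p - 1) * a"
    using \<open>2 \<le> p\<close> power_minus_mult[of p a] by simp
  then have roots: "c ^ p = a ^ (p - 1) * c" if "c \<in> G" for c
    using Fp_multiples_power_eq[OF p] add_subgroup_eq_Fp_multiples[OF p(2) G(1,2,3) a] that
    by blast
  show ?thesis
    using a roots by (intro that[of a "a ^ (p - 1)"]) simp_all
qed

lemma G_fixed_eq_pcompose_almost_AS_poly:
  fixes f :: "'k::field poly"
  assumes p: "prime p" "CHAR('k) = p" and G: "finite G" "card G = p"
    and roots: "\<And>c. c \<in> G \<Longrightarrow> c ^ p = \<beta> * c"
    and f: "G_fixed G f" "irreducible f" "monic f"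
  obtains h where "f = pcompose h (almost_AS_poly p \<beta> 0)" "irreducible h" "monic h"
    "degree f = degree h * p"
proof -
  let ?L = "almost_AS_poly p \<beta> 0"
  have "2 \<le> p"
    using p(1) by (rule prime_ge_2_nat)
  then have L: "degree ?L = p" "monic ?L"
    using degree_almost_AS_poly[OF \<open>2 \<le> p\<close>, of \<beta> 0] by simp_all
  have "G_fixed G ?L"
    using roots by (rule G_fixed_almost_AS_poly[OF p])
  moreover have "degree ?L \<le> card G" "0 < degree ?L"
    using L(1) G(2) \<open>2 \<le> p\<close> by simp_all
  ultimately obtain h where h: "f = pcompose h ?L"
    using G_fixed_imp_pcompose[OF G(1) _ _ _ f(1)] by blast
  show ?thesis
  proof (rule that[OF h])
    show "irreducible h"
      using f(2) unfolding h
      by (rule irreducible_pcompose_imp_irreducible) (use L(1) \<open>2 \<le> p\<close> in simp)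
    show "monic h"
      using f(3) lead_coeff_comp[of ?L h] L \<open>2 \<le> p\<close> unfolding h by simp
    show "degree f = degree h * p"
      unfolding h using L(1) by simp
  qed
qed

lemma (in comm_ring_hom) image_power_eq_mult:
  assumes "\<And>c. c \<in> G \<Longrightarrow> c ^ p = \<beta> * c" "c \<in> hom ` G"
  shows "c ^ p = hom \<beta> * c"
proof -
  from assms(2) obtain c0 where "c0 \<in> G" "c = hom c0"
    by blast
  with assms(1) show ?thesis
    by (metis hom_mult hom_power)
qed

lemma field_homI:
  fixes \<phi> :: "'a::field \<Rightarrow> 'b::field"
  assumes "\<And>x y. \<phi> (x + y) = \<phi> x + \<phi> y" "\<And>x y. \<phi> (x * y) = \<phi> x * \<phi> y" "\<phi> 1 = 1"
  shows "field_hom \<phi>"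
proof -
  have "\<phi> 0 = 0"
    using assms(1)[of 0 0] by (metis add.right_neutral add_left_cancel)
  with assms show ?thesis
    by unfold_locales simp_all
qed

lemma card_UNIV_field_ge_2: "2 \<le> CARD('k::{field,finite})"
proof -
  have "card {0, 1 :: 'k} \<le> CARD('k)"
    by (rule card_mono) auto
  then show ?thesis
    by simp
qed

lemma CHAR_eq_if_card_prime_power:
  assumes "prime p" "CARD('k::{field,finite}) = p ^ n"
  shows "CHAR('k) = p"
proof -
  have "prime CHAR('k)"
    by (simp add: finite_imp_CHAR_pos prime_CHAR_semidom)
  moreover have "CHAR('k) dvd p ^ n"
    using CHAR_dvd_CARD[where 'a = 'k] assms(2) by simp
  ultimately have "CHAR('k) dvd p"
    using prime_dvd_power by blast
  with \<open>prime CHAR('k)\<close> assms(1) show ?thesis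
    by (simp add: primes_dvd_imp_eq)
qed

lemma poly_degree_less_eq_image_Poly:
  assumes "0 < n"
  shows "{y :: 'a::zero poly. degree y < n} = Poly ` {xs. length xs = n}"
proof (intro equalityI subsetI)
  fix y :: "'a poly" assume "y \<in> {y. degree y < n}"
  then have "length (coeffs y) \<le> n"
    using length_coeffs_degree[of y] by (cases "y = 0") auto
  then show "y \<in> Poly ` {xs. length xs = n}"
    by (intro image_eqI[of _ _ "coeffs y @ replicate (n - length (coeffs y)) 0"]) auto
next
  fix y :: "'a poly" assume "y \<in> Poly ` {xs. length xs = n}"
  then obtain xs where "y = Poly xs" "length xs = n"
    by auto
  then have "degree y \<le> n - 1"
    by (intro degree_le) (auto simp: nth_default_def)
  with assms show "y \<in> {y. degree y < n}"
    by simp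
qed

lemma card_poly_degree_less:
  assumes "0 < n"
  shows "finite {y :: 'a::{zero,finite} poly. degree y < n}"
    and "card {y :: 'a poly. degree y < n} = CARD('a) ^ n"
proof -
  have "inj_on Poly {xs :: 'a list. length xs = n}"
  proof (rule inj_onI)
    fix xs ys :: "'a list"
    assume "xs \<in> {xs. length xs = n}" "ys \<in> {xs. length xs = n}" "Poly xs = Poly ys"
    then have len: "length xs = length ys" and nth: "nth_default 0 xs = nth_default 0 ys"
      by (simp, metis coeff_Poly_eq)
    show "xs = ys"
    proof (rule nth_equalityI)
      fix i assume "i < length xs"
      then show "xs ! i = ys ! i"
        using len nth by (metis nth_default_nth)
    qed (fact len)
  qed
  then show "finite {y :: 'a poly. degree y < n}"
    and "card {y :: 'a poly. degree y < n} = CARD('a) ^ n"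
    using card_lists_length_eq[of "UNIV :: 'a set" n] finite_lists_length_eq[of "UNIV :: 'a set" n]
    by (simp_all add: poly_degree_less_eq_image_Poly[OF assms] card_image)
qed

(* Fermat in F_q[T]/(h): multiplication by g permutes the nonzero residues of degree < deg h. *)
lemma irreducible_dvd_power_card_minus_one:
  fixes h g :: "'k::{field,finite} poly"
  assumes irr: "irreducible h" and "\<not> h dvd g"
  shows "h dvd g ^ (CARD('k) ^ degree h - 1) - 1"
proof -
  define D where "D = {y :: 'k poly. degree y < degree h} - {0}"
  have "prime_elem h" "0 < degree h" "h \<noteq> 0"
    using irr by (auto intro: field_poly_irreducible_imp_prime irreducible_degree_pos)
  then have "finite D" "card D = CARD('k) ^ degree h - 1"
    using card_poly_degree_less[of "degree h", where 'a = 'k] by (simp_all add: D_def)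
  have not_dvd: "\<not> h dvd y" if "y \<in> D" for y
    using that not_dvd_degree_less by (auto simp: D_def)
  define F where "F y = g * y mod h" for y
  have "F y \<in> D" if "y \<in> D" for y
  proof -
    have "\<not> h dvd g * y"
      using \<open>prime_elem h\<close> \<open>\<not> h dvd g\<close> not_dvd[OF that] by (simp add: prime_elem_dvd_mult_iff)
    then show ?thesis
      using degree_mod_less'[OF \<open>h \<noteq> 0\<close>] by (auto simp: D_def F_def mod_eq_0_iff_dvd)
  qed
  moreover have "inj_on F D"
  proof (rule inj_onI)
    fix y z assume "y \<in> D" "z \<in> D" "F y = F z"
    then have "h dvd g * (y - z)"
      by (simp add: F_def mod_eq_dvd_iff right_diff_distrib)
    with \<open>prime_elem h\<close> \<open>\<not> h dvd g\<close> have "h dvd y - z"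
      by (simp add: prime_elem_dvd_mult_iff)
    moreover have "degree (y - z) < degree h"
      using \<open>y \<in> D\<close> \<open>z \<in> D\<close> by (simp add: D_def degree_diff_less)
    ultimately show "y = z"
      using not_dvd_degree_less[of "y - z" h] by auto
  qed
  ultimately have "F ` D = D"
    using \<open>finite D\<close> by (intro endo_inj_surj) auto
  then have "\<Prod>D = (\<Prod>y\<in>D. F y)"
    using prod.reindex[OF \<open>inj_on F D\<close>, of "\<lambda>y. y"] by simp
  then have "\<Prod>D mod h = (\<Prod>y\<in>D. g * y) mod h"
    by (simp add: F_def mod_prod_eq)
  then have "h dvd (g ^ card D - 1) * \<Prod>D"
    by (simp add: mod_eq_dvd_iff prod.distrib left_diff_distrib dvd_diff_commute)
  moreover have "\<not> h dvd \<Prod>D"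
  proof
    assume "h dvd \<Prod>D"
    then obtain y where "y \<in> D" "h dvd y"
      by (rule prime_elem_dvd_prodE[OF \<open>prime_elem h\<close>])
    with not_dvd show False by blast
  qed
  ultimately show ?thesis
    using \<open>prime_elem h\<close> \<open>card D = _\<close> by (simp add: prime_elem_dvd_mult_iff)
qed

lemma irreducible_dvd_power_card_pow_degree:
  fixes h g :: "'k::{field,finite} poly"
  assumes "irreducible h"
  shows "h dvd g ^ (CARD('k) ^ degree h) - g"
proof -
  have "Suc (CARD('k) ^ degree h - 1) = CARD('k) ^ degree h"
    by simp
  then have "g ^ (CARD('k) ^ degree h) - g = g * (g ^ (CARD('k) ^ degree h - 1) - 1)"
    by (metis power_Suc right_diff_distrib mult_1_right)
  then show ?thesis
    using irreducible_dvd_power_card_minus_one[OF assms, of g] by (cases "h dvd g") simp_all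
qed

lemma x_power_card_minus_x_eq_prod:
  "[:0, 1:] ^ CARD('k::{field,finite}) - [:0, 1:] = (\<Prod>b\<in>UNIV. [:-b, 1 :: 'k:])"
proof (rule monic_dvd_imp_eq[symmetric])
  let ?X = "[:0, 1 :: 'k:]"
  have X: "?X ^ CARD('k) - ?X = almost_AS_poly CARD('k) 1 0"
    by (simp add: almost_AS_poly_def monom_altdef)
  note deg_X = degree_almost_AS_poly[OF card_UNIV_field_ge_2[where 'k = 'k], of 1 0]
  show "monic (?X ^ CARD('k) - ?X)"
    unfolding X by (fact deg_X(2))
  have "degree (\<Prod>b\<in>UNIV. [:-b, 1 :: 'k:]) = CARD('k)"
    by (simp add: degree_prod_eq_sum_degree)
  then show "degree (?X ^ CARD('k) - ?X) \<le> degree (\<Prod>b\<in>UNIV. [:-b, 1 :: 'k:])"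
    unfolding X deg_X(1) by simp
  show "monic (\<Prod>b\<in>UNIV. [:-b, 1 :: 'k:])"
    by (simp add: lead_coeff_prod)
  have "\<Prod>((\<lambda>b. [:-b, 1:]) ` UNIV) dvd ?X ^ CARD('k) - ?X"
  proof (rule prod_monic_irreducible_dvd)
    fix x assume "x \<in> range (\<lambda>b. [:-b, 1 :: 'k:])"
    then obtain b where "x = [:-b, 1:]" by auto
    moreover have "irreducible [:-b, 1:]"
      by (simp add: irreducible_linear_field_poly)
    ultimately show "irreducible x \<and> monic x \<and> x dvd ?X ^ CARD('k) - ?X"
      using irreducible_dvd_power_card_pow_degree[of x ?X] by simp
  qed simp
  moreover have "inj (\<lambda>b. [:-b, 1 :: 'k:])"
    by (rule injI) simp
  ultimately show "(\<Prod>b\<in>UNIV. [:-b, 1:]) dvd ?X ^ CARD('k) - ?X"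
    by (simp add: prod.reindex)
qed

lemma map_poly_irreducible_splits:
  fixes \<phi> :: "'a::{field,finite} \<Rightarrow> 'b::{field,finite}" and h :: "'a poly"
  assumes "field_hom \<phi>" "irreducible h" "monic h" "CARD('b) = CARD('a) ^ degree h"
  shows "\<exists>xs. map_poly \<phi> h = prod_list (map (\<lambda>b. [:-b, 1:]) xs)"
proof (rule monic_dvd_prod_linear_factors)
  interpret field_hom \<phi> by fact
  interpret map_\<phi>: map_poly_inj_idom_hom \<phi> ..
  have "h dvd [:0, 1:] ^ CARD('b) - [:0, 1:]"
    using irreducible_dvd_power_card_pow_degree[OF assms(2)] assms(4) by simp
  then have "map_poly \<phi> h dvd map_poly \<phi> ([:0, 1:] ^ CARD('b) - [:0, 1:])"
    by (rule map_\<phi>.hom_dvd)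
  then show "map_poly \<phi> h dvd (\<Prod>b\<in>UNIV. [:-b, 1:])"
    by (simp add: map_\<phi>.hom_minus map_\<phi>.hom_power x_power_card_minus_x_eq_prod)
  show "monic (map_poly \<phi> h)"
    using assms(3) by simp
qed

(* A root \<theta> would make g \<mapsto> \<phi>(g)(\<theta>) injective on the q^(deg f) polynomials of degree < deg f. *)
lemma map_poly_irreducible_no_root:
  fixes \<phi> :: "'a::{field,finite} \<Rightarrow> 'b::{field,finite}" and f :: "'a poly"
  assumes "field_hom \<phi>" "irreducible f" "CARD('b) = CARD('a) ^ s" "s < degree f"
  shows "poly (map_poly \<phi> f) \<theta> \<noteq> 0"
proof
  interpret field_hom \<phi> by fact
  interpret map_\<phi>: map_poly_inj_idom_hom \<phi> ..
  assume root: "poly (map_poly \<phi> f) \<theta> = 0"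
  let ?D = "{g :: 'a poly. degree g < degree f}"
  have "inj_on (\<lambda>g. poly (map_poly \<phi> g) \<theta>) ?D"
  proof (rule inj_onI, rule ccontr)
    fix g1 g2 assume "g1 \<in> ?D" "g2 \<in> ?D" "g1 \<noteq> g2"
      and eq: "poly (map_poly \<phi> g1) \<theta> = poly (map_poly \<phi> g2) \<theta>"
    define g where "g = g1 - g2"
    define M where "M = CARD('a) ^ degree f - 1"
    have "g \<noteq> 0" "degree g < degree f"
      using \<open>g1 \<in> ?D\<close> \<open>g2 \<in> ?D\<close> \<open>g1 \<noteq> g2\<close> by (simp_all add: g_def degree_diff_less)
    then have "f dvd g ^ M - 1"
      unfolding M_def using assms(2) not_dvd_degree_less by (blast intro: irreducible_dvd_power_card_minus_one)
    then have "map_poly \<phi> f dvd map_poly \<phi> (g ^ M - 1)"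
      by (rule map_\<phi>.hom_dvd)
    with root have "poly (map_poly \<phi> (g ^ M - 1)) \<theta> = 0"
      by (metis dvdE mult_zero_left poly_mult)
    moreover have "1 < CARD('a) ^ degree f"
      using card_UNIV_field_ge_2[where 'k = 'a] \<open>degree g < degree f\<close>
      by (intro one_less_power) simp_all
    then have "0 < M"
      by (simp add: M_def)
    ultimately show False
      using eq by (simp add: g_def map_\<phi>.hom_minus map_\<phi>.hom_power power_0_left)
  qed
  then have "card ?D \<le> CARD('b)"
    by (rule card_inj_on_le) simp_all
  moreover have "CARD('a) ^ s < CARD('a) ^ degree f"
    using card_UNIV_field_ge_2[where 'k = 'a] assms(4) by (intro power_strict_increasing) simp_all
  ultimately show False
    using assms(3,4) card_poly_degree_less[of "degree f", where 'a = 'a] by simp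
qed

theorem theorem2p5:
  fixes \<phi> :: "'a::{field,finite} \<Rightarrow> 'b::{field,finite}"
    and p s :: nat and G :: "'a set" and f :: "'a poly"
  assumes p_prime: "prime p"
    and q_power: "\<exists>n. card (UNIV :: 'a set) = p ^ n"
    and s_pos: "s \<ge> 1"
    and ext_card: "card (UNIV :: 'b set) = card (UNIV :: 'a set) ^ s"
    and hom_add: "\<And>x y. \<phi> (x + y) = \<phi> x + \<phi> y"
    and hom_mult: "\<And>x y. \<phi> (x * y) = \<phi> x * \<phi> y"
    and hom_one: "\<phi> 1 = 1"
    and G_sub: "add_subgroup G"
    and G_card: "card G = p"
    and f_fixed: "G_fixed G f"
    and f_monic: "lead_coeff f = 1"
    and f_irr: "irreducible f"
    and f_deg: "degree f = p * s"
  shows "\<exists>gs :: 'b poly list.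
           map_poly \<phi> f = prod_list gs \<and>
           (\<forall>g\<in>set gs. irreducible g \<and> G_fixed (\<phi> ` G) g \<and>
              (\<exists>\<beta> \<gamma>. \<beta> \<in> \<phi> ` UNIV \<and> \<beta> \<noteq> 0 \<and>
                  g = monom 1 p - [:\<gamma>, \<beta>:]))"
proof -
  have hom: "field_hom \<phi>"
    using hom_add hom_mult hom_one by (rule field_homI)
  interpret \<phi>: field_hom \<phi>
    by (fact hom)
  obtain n where "CARD('a) = p ^ n"
    using q_power by blast
  moreover from this have "CARD('b) = p ^ (n * s)"
    using ext_card by (simp add: power_mult)
  ultimately have CHAR: "CHAR('a) = p" "CHAR('b) = p"
    using p_prime CHAR_eq_if_card_prime_power by blast+
  have "finite G"
    by simp
  then obtain a \<beta> where a: "a \<in> G" "a \<noteq> 0" "\<beta> \<noteq> 0" and roots: "\<And>c. c \<in> G \<Longrightarrow> c ^ p = \<beta> * c"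
    using add_subgroup_prime_card_roots[OF p_prime CHAR(1) G_sub _ G_card] by blast
  obtain h where f: "f = pcompose h (almost_AS_poly p \<beta> 0)"
    and h: "irreducible h" "monic h" "degree f = degree h * p"
    using G_fixed_eq_pcompose_almost_AS_poly[OF p_prime CHAR(1) \<open>finite G\<close> G_card roots f_fixed f_irr f_monic]
    by blast
  obtain xs where "map_poly \<phi> h = prod_list (map (\<lambda>b. [:-b, 1:]) xs)"
    using map_poly_irreducible_splits[OF hom h(1,2)] ext_card h(3) f_deg p_prime by auto
  then have \<phi>f: "map_poly \<phi> f = prod_list (map (almost_AS_poly p (\<phi> \<beta>)) xs)"
    by (simp add: f \<phi>.map_poly_pcompose \<phi>.map_poly_almost_AS_poly pcompose_prod_linear_almost_AS_poly)
  have "poly (map_poly \<phi> f) x \<noteq> 0" for x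
    using map_poly_irreducible_no_root[OF hom f_irr ext_card] f_deg s_pos prime_ge_2_nat[OF p_prime]
    by simp
  then have "poly (almost_AS_poly p (\<phi> \<beta>) \<gamma>) x \<noteq> 0" if "\<gamma> \<in> set xs" for \<gamma> x
    using that \<phi>f dvd_trans poly_eq_0_iff_dvd prod_list_dvd by (metis imageI set_map)
  moreover have \<phi>_roots: "\<And>c. c \<in> \<phi> ` G \<Longrightarrow> c ^ p = \<phi> \<beta> * c"
    using roots by (rule \<phi>.image_power_eq_mult)
  ultimately have "irreducible (almost_AS_poly p (\<phi> \<beta>) \<gamma>)" if "\<gamma> \<in> set xs" for \<gamma>
    using that a(1,2) p_prime CHAR(2) by (intro almost_AS_poly_irreducible[of p "\<phi> a"]) simp_all
  moreover have "G_fixed (\<phi> ` G) (almost_AS_poly p (\<phi> \<beta>) \<gamma>)" for \<gamma>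
    using \<phi>_roots by (rule G_fixed_almost_AS_poly[OF p_prime CHAR(2)])
  ultimately show ?thesis
    using \<phi>f a(3) by (intro exI[of _ "map (almost_AS_poly p (\<phi> \<beta>)) xs"]) (auto simp: almost_AS_poly_def)
qed

end
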